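(* Let $\mathfrak{B}\in\mathfrak{L}_{m,p}$ and let $Q_\Phi$ be a QDF. Then $\mathfrak{B}$ is dissipative with respect to $Q_\Phi$ if and only if there exists a symmetric positive semidefinite matrix $\Psi$ such that $Q_{\nabla\Psi}\le Q_\Phi$ on $\mathfrak{B}$.
   Context: Time axis $\mathbb{Z}_+$, $m,p\ge1$, $q=m+p$. $\mathfrak{L}_{m,p}$ is the set of behaviors $\mathfrak{B}=\{w=(u,y):\mathbb{Z}_+\to\mathbb{R}^{q}\mid\exists x:\mathbb{Z}_+\to\mathbb{R}^n,\ x(t+1)=Ax(t)+Bu(t),\ y(t)=Cx(t)+Du(t)\ \forall t\}$ for real matrices $A,B,C,D$. A QDF with coefficient matrix $\Psi\in\mathbb{S}^{(M+1)q}$ ($M\ge-1$, $M=-1$ giving the zero QDF) is $Q_\Psi(w)(t)=w_{[t,t+M]}^\top\Psi w_{[t,t+M]}$ with $w_{[t,t+M]}=\operatorname{col}(w(t),\dots,w(t+M))$. $\nabla\Psi:=\begin{bmatrix}0_{q,q}&0\\0&\Psi\end{bmatrix}-\begin{bmatrix}\Psi&0\\0&0_{q,q}\end{bmatrix}$, so $Q_{\nabla\Psi}(w)(t)=Q_\Psi(w)(t+1)-Q_\Psi(w)(t)$. "$Q_1\le Q_2$ on $\mathfrak{B}$" means $Q_1(w)(t)\le Q_2(w)(t)$ for all $w\in\mathfrak{B}$, $t\in\mathbb{Z}_+$. $\mathfrak{B}$ is dissipative with respect to $Q_\Phi$ if there exists a QDF $Q_\Psi$ with $Q_\Psi\ge0$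 on $\mathfrak{B}$ and $Q_{\nabla\Psi}\le Q_\Phi$ on $\mathfrak{B}$. *)

theory Defs
  imports "Jordan_Normal_Form.Matrix"
begin

text \<open>Signals are functions nat => real vec (time axis Z_+ = nat), with w t of dimension q = m + p,
  w t = col(u t, y t), u t = first m entries, y t = last p entries.
  A QDF is given by a natural number N = M + 1 (N = 0 is the zero QDF, M = -1) and a
  symmetric coefficient matrix Psi of size (N*q) x (N*q).\<close>

definition sym_mat :: "real mat \<Rightarrow> bool" where
  "sym_mat P \<longleftrightarrow> transpose_mat P = P"

definition psd_mat :: "real mat \<Rightarrow> bool" where
  "psd_mat P \<longleftrightarrow> (\<forall>v \<in> carrier_vec (dim_row P). 0 \<le> scalar_prod v (P *\<^sub>v v))"

definition iso_behavior ::
  "nat \<Rightarrow> nat \<Rightarrow> nat \<Rightarrow> real mat \<Rightarrow> real mat \<Rightarrow> real mat \<Rightarrow> real mat \<Rightarrow> (nat \<Rightarrow> real vec) set" where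
  "iso_behavior m p n A B C D =
     {w. (\<forall>t. w t \<in> carrier_vec (m + p)) \<and>
         (\<exists>x. \<forall>t. x t \<in> carrier_vec n \<and>
              x (Suc t) = A *\<^sub>v x t + B *\<^sub>v vec_first (w t) m \<and>
              vec_last (w t) p = C *\<^sub>v x t + D *\<^sub>v vec_first (w t) m)}"

definition L_mp :: "nat \<Rightarrow> nat \<Rightarrow> (nat \<Rightarrow> real vec) set set" where
  "L_mp m p = {Bh. \<exists>n A B C D. A \<in> carrier_mat n n \<and> B \<in> carrier_mat n m \<and>
                    C \<in> carrier_mat p n \<and> D \<in> carrier_mat p m \<and>
                    Bh = iso_behavior m p n A B C D}"

text \<open>w_[t,t+N-1] = col(w t, ..., w (t+N-1)), a vector of dimension N*q.\<close>
definition window :: "nat \<Rightarrow> nat \<Rightarrow> (nat \<Rightarrow> real vec) \<Rightarrow> nat \<Rightarrow> real vec" where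
  "window q N w t = vec (N * q) (\<lambda>k. w (t + k div q) $ (k mod q))"

definition QDF :: "nat \<Rightarrow> real mat \<Rightarrow> (nat \<Rightarrow> real vec) \<Rightarrow> nat \<Rightarrow> real" where
  "QDF q P w t = (let N = dim_row P div q in scalar_prod (window q N w t) (P *\<^sub>v window q N w t))"

text \<open>nabla Psi = diag(0_q, Psi) - diag(Psi, 0_q), of size ((N+1)*q) x ((N+1)*q).\<close>
definition nabla :: "nat \<Rightarrow> real mat \<Rightarrow> real mat" where
  "nabla q P = mat (dim_row P + q) (dim_row P + q)
     (\<lambda>(i, j). (if q \<le> i \<and> q \<le> j then P $$ (i - q, j - q) else 0)
             - (if i < dim_row P \<and> j < dim_row P then P $$ (i, j) else 0))"

definition is_QDF_coeff :: "nat \<Rightarrow> real mat \<Rightarrow> bool" where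
  "is_QDF_coeff q P \<longleftrightarrow> (\<exists>N. P \<in> carrier_mat (N * q) (N * q)) \<and> sym_mat P"

definition dissipative :: "nat \<Rightarrow> (nat \<Rightarrow> real vec) set \<Rightarrow> real mat \<Rightarrow> bool" where
  "dissipative q Bh Phi \<longleftrightarrow>
     (\<exists>Psi. is_QDF_coeff q Psi \<and>
        (\<forall>w \<in> Bh. \<forall>t. 0 \<le> QDF q Psi w t) \<and>
        (\<forall>w \<in> Bh. \<forall>t. QDF q (nabla q Psi) w t \<le> QDF q Phi w t))"

end

theory Submission
  imports Defs "Jordan_Normal_Form.VS_Connect"
begin

(*
  The storage function Psi of a dissipative behaviour is only ever evaluated on the space V of
  windows w_[t,t+M] of trajectories, and by linearity and shift invariance V is one linear
  subspace, independent of t. Replacing Psi by Pi^T Psi Pi, where Pi is the orthogonal projection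
  onto V, changes neither Q_Psi nor Q_(nabla Psi) on the behaviour, and the new matrix is positive
  semidefinite because Q_Psi >= 0 on the behaviour says exactly that Psi is nonnegative on V.
*)

lemma sum_lessThan_add:
  "(\<Sum>i<m + n. g i) = (\<Sum>i<m. g i) + (\<Sum>i<n. g (i + m))" for g :: "nat \<Rightarrow> 'a::comm_monoid_add"
  by (induction n) (auto simp: add.commute add.left_commute)

lemma quadratic_form_eq_sum:
  assumes "P \<in> carrier_mat d d" "v \<in> carrier_vec d"
  shows "v \<bullet> (P *\<^sub>v v) = (\<Sum>i<d. \<Sum>j<d. v $ i * P $$ (i, j) * v $ j)"
  using assms by (auto simp: scalar_prod_def mult_mat_vec_def row_def sum_distrib_left mult.assoc
      atLeast0LessThan intro!: sum.cong)

lemma window_carrier [simp]: "window q N w t \<in> carrier_vec (N * q)"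
  by (simp add: window_def)

lemma window_index: "i < N * q \<Longrightarrow> window q N w t $ i = w (t + i div q) $ (i mod q)"
  by (simp add: window_def)

lemma QDF_eq_quadratic_form:
  assumes "0 < q" "P \<in> carrier_mat (N * q) (N * q)"
  shows "QDF q P w t = window q N w t \<bullet> (P *\<^sub>v window q N w t)"
  using assms by (simp add: QDF_def)

lemma QDF_eq_sum:
  assumes "0 < q" and P: "P \<in> carrier_mat (N * q) (N * q)"
  shows "QDF q P w t =
    (\<Sum>i<N * q. \<Sum>j<N * q. w (t + i div q) $ (i mod q) * P $$ (i, j) * w (t + j div q) $ (j mod q))"
  unfolding QDF_eq_quadratic_form[OF assms] quadratic_form_eq_sum[OF P window_carrier]
  by (simp add: window_index)

lemma nabla_carrier:
  "P \<in> carrier_mat (N * q) (N * q) \<Longrightarrow> nabla q P \<in> carrier_mat (Suc N * q) (Suc N * q)"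
  by (auto simp: nabla_def)

lemma QDF_nabla:
  assumes q: "0 < q" and P: "P \<in> carrier_mat (N * q) (N * q)"
  shows "QDF q (nabla q P) w t = QDF q P w (Suc t) - QDF q P w t"
proof -
  define K where "K = N * q"
  define a where "a i = w (t + i div q) $ (i mod q)" for i
  have a_shift: "a (i + q) = w (Suc t + i div q) $ (i mod q)" for i
    using q by (simp add: a_def)
  have "QDF q (nabla q P) w t = (\<Sum>i<K + q. \<Sum>j<K + q. a i * nabla q P $$ (i, j) * a j)"
    using QDF_eq_sum[OF q nabla_carrier[OF P], of w t] by (simp add: K_def a_def add.commute)
  also have "\<dots> =
      (\<Sum>i<K + q. \<Sum>j<K + q. a i * (if q \<le> i \<and> q \<le> j then P $$ (i - q, j - q) else 0) * a j)
    - (\<Sum>i<K + q. \<Sum>j<K + q. a i * (if i < K \<and> j < K then P $$ (i, j) else 0) * a j)"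
    using P by (simp add: nabla_def K_def sum_subtractf[symmetric] algebra_simps)
  also have "(\<Sum>i<K + q. \<Sum>j<K + q. a i * (if q \<le> i \<and> q \<le> j then P $$ (i - q, j - q) else 0) * a j)
      = (\<Sum>i<K. \<Sum>j<K. a (i + q) * P $$ (i, j) * a (j + q))"
    by (subst (1 2) add.commute) (simp add: sum_lessThan_add)
  also have "(\<Sum>i<K + q. \<Sum>j<K + q. a i * (if i < K \<and> j < K then P $$ (i, j) else 0) * a j)
      = (\<Sum>i<K. \<Sum>j<K. a i * P $$ (i, j) * a j)"
    by (simp add: sum_lessThan_add)
  finally show ?thesis
    unfolding QDF_eq_sum[OF q P] a_shift by (simp add: K_def a_def)
qed

lemma window_shift: "window q N (\<lambda>t. w (t + s)) 0 = window q N w s"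
  by (intro eq_vecI) (auto simp: window_def add.commute)

lemma window_add:
  assumes "0 < q" "\<And>t. w1 t \<in> carrier_vec q" "\<And>t. w2 t \<in> carrier_vec q"
  shows "window q N (\<lambda>t. w1 t + w2 t) s = window q N w1 s + window q N w2 s"
  using assms(1) assms(2,3)[THEN carrier_vecD] by (intro eq_vecI) (auto simp: window_def)

lemma window_smult:
  assumes "0 < q" "\<And>t. w t \<in> carrier_vec q"
  shows "window q N (\<lambda>t. c \<cdot>\<^sub>v w t) s = c \<cdot>\<^sub>v window q N w s"
  using assms(1) assms(2)[THEN carrier_vecD] by (intro eq_vecI) (auto simp: window_def)

lemma window_zero: "0 < q \<Longrightarrow> window q N (\<lambda>t. 0\<^sub>v q) s = 0\<^sub>v (N * q)"
  by (intro eq_vecI) (auto simp: window_def)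

definition vec_subspace :: "nat \<Rightarrow> real vec set \<Rightarrow> bool" where
  "vec_subspace k V \<longleftrightarrow> V \<subseteq> carrier_vec k \<and> 0\<^sub>v k \<in> V \<and>
     (\<forall>x \<in> V. \<forall>y \<in> V. x + y \<in> V) \<and> (\<forall>c. \<forall>x \<in> V. c \<cdot>\<^sub>v x \<in> V)"

fun orthogonal_list :: "real vec list \<Rightarrow> bool" where
  "orthogonal_list [] = True"
| "orthogonal_list (g # gs) \<longleftrightarrow> g \<bullet> g \<noteq> 0 \<and> (\<forall>x \<in> set gs. g \<bullet> x = 0) \<and> orthogonal_list gs"

fun proj_mat :: "nat \<Rightarrow> real vec list \<Rightarrow> real mat" where
  "proj_mat k [] = 0\<^sub>m k k"
| "proj_mat k (g # gs) = proj_mat k gs + mat k k (\<lambda>(i, j). g $ i * g $ j / (g \<bullet> g))"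

lemma proj_mat_carrier [simp]: "proj_mat k gs \<in> carrier_mat k k"
  by (induction gs) auto

lemma proj_mat_Nil_mult_vec [simp]: "v \<in> carrier_vec k \<Longrightarrow> proj_mat k [] *\<^sub>v v = 0\<^sub>v k"
  by (intro eq_vecI) (auto simp: scalar_prod_def)

lemma proj_mat_Cons_mult_vec [simp]:
  assumes g: "g \<in> carrier_vec k" and v: "v \<in> carrier_vec k"
  shows "proj_mat k (g # gs) *\<^sub>v v = proj_mat k gs *\<^sub>v v + ((g \<bullet> v) / (g \<bullet> g)) \<cdot>\<^sub>v g"
proof -
  have "mat k k (\<lambda>(i, j). g $ i * g $ j / (g \<bullet> g)) *\<^sub>v v = ((g \<bullet> v) / (g \<bullet> g)) \<cdot>\<^sub>v g"
    using g v by (intro eq_vecI) (auto simp: scalar_prod_def sum_divide_distrib sum_distrib_left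
        mult.commute mult.left_commute)
  then show ?thesis
    using v by (simp add: add_mult_distrib_mat_vec[of _ k k])
qed

declare proj_mat.simps [simp del]

lemma proj_mat_mult_vec_carrier [simp]: "v \<in> carrier_vec k \<Longrightarrow> proj_mat k gs *\<^sub>v v \<in> carrier_vec k"
  using proj_mat_carrier by (rule mult_mat_vec_carrier)

lemma proj_mat_mult_vec_in_subspace:
  assumes V: "vec_subspace k V" and gs: "set gs \<subseteq> V" and v: "v \<in> carrier_vec k"
  shows "proj_mat k gs *\<^sub>v v \<in> V"
  using gs
proof (induction gs)
  case Nil
  then show ?case using V v by (simp add: vec_subspace_def)
next
  case (Cons g gs)
  then have "g \<in> carrier_vec k" using V by (auto simp: vec_subspace_def)
  then show ?case using Cons V v by (auto simp: vec_subspace_def)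
qed

lemma scalar_prod_proj_mat_orthogonal:
  assumes "set gs \<subseteq> carrier_vec k" "v \<in> carrier_vec k" "x \<in> carrier_vec k"
    and "\<forall>g \<in> set gs. x \<bullet> g = 0"
  shows "x \<bullet> (proj_mat k gs *\<^sub>v v) = 0"
  using assms by (induction gs) (auto simp: scalar_prod_add_distrib[of _ k])

lemma scalar_prod_proj_mat:
  assumes gs: "set gs \<subseteq> carrier_vec k" and v: "v \<in> carrier_vec k"
    and "orthogonal_list gs" and x: "x \<in> set gs"
  shows "x \<bullet> (proj_mat k gs *\<^sub>v v) = x \<bullet> v"
  using assms(1,3,4)
proof (induction gs)
  case (Cons g gs)
  then have g: "g \<in> carrier_vec k" and x: "x \<in> carrier_vec k" and gg: "g \<bullet> g \<noteq> 0" by auto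
  have "x \<bullet> (proj_mat k (g # gs) *\<^sub>v v) = x \<bullet> (proj_mat k gs *\<^sub>v v) + (g \<bullet> v) / (g \<bullet> g) * (x \<bullet> g)"
    using g v x by (simp add: scalar_prod_add_distrib[of _ k])
  also have "\<dots> = x \<bullet> v"
  proof (cases "x = g")
    case True
    have "g \<bullet> (proj_mat k gs *\<^sub>v v) = 0"
      using Cons.prems g v by (intro scalar_prod_proj_mat_orthogonal[of _ k]) auto
    then show ?thesis using True gg g v by (simp add: comm_scalar_prod[of g k v])
  next
    case False
    then have "x \<in> set gs" using Cons.prems by simp
    then show ?thesis using Cons g x by (auto simp: comm_scalar_prod[of x k g])
  qed
  finally show ?case .
qed simp

lemma proj_mat_residual_orthogonal:
  assumes gs: "set gs \<subseteq> carrier_vec k" and v: "v \<in> carrier_vec k"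
    and orth: "orthogonal_list gs" and g: "g \<in> set gs"
  shows "(v - proj_mat k gs *\<^sub>v v) \<bullet> g = 0"
proof -
  have "g \<in> carrier_vec k" using gs g by auto
  then show ?thesis
    using v scalar_prod_proj_mat[OF gs v orth g]
    by (simp add: minus_scalar_prod_distrib[of _ k] comm_scalar_prod[of v k g]
        comm_scalar_prod[of "proj_mat k gs *\<^sub>v v" k g])
qed

lemma orthogonal_list_scalar_prod_eq_0:
  assumes "set gs \<subseteq> carrier_vec k" "orthogonal_list gs" "x \<in> set gs" "y \<in> set gs" "x \<noteq> y"
  shows "x \<bullet> y = 0"
  using assms by (induction gs) (auto simp: comm_scalar_prod[of x k y])

lemma orthogonal_list_distinct: "orthogonal_list gs \<Longrightarrow> distinct gs"
  by (induction gs) auto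

lemma orthogonal_list_length_le:
  assumes gs: "set gs \<subseteq> carrier_vec k" and orth: "orthogonal_list gs"
  shows "length gs \<le> k"
proof -
  interpret vec_space "TYPE(real)" k .
  have "\<not> lin_dep (set gs)"
  proof
    assume "lin_dep (set gs)"
    then obtain A a v where fin: "finite A" and A: "A \<subseteq> set gs"
      and comb: "lincomb a A = 0\<^sub>v k" and vA: "v \<in> A" and av: "a v \<noteq> 0"
      unfolding lin_dep_def by auto
    have Ak: "A \<subseteq> carrier_vec k" and v: "v \<in> carrier_vec k" using A gs vA by auto
    have "0 = lincomb a A \<bullet> v" using comb v by simp
    also have "\<dots> = (\<Sum>u\<in>A. a u * (u \<bullet> v))"
      unfolding lincomb_def using Ak v
      by (subst finsum_scalar_prod_sum) (auto intro!: sum.cong)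
    also have "\<dots> = a v * (v \<bullet> v) + (\<Sum>u\<in>A - {v}. a u * (u \<bullet> v))"
      using fin vA by (simp add: sum.remove)
    also have "(\<Sum>u\<in>A - {v}. a u * (u \<bullet> v)) = 0"
      using A vA orthogonal_list_scalar_prod_eq_0[OF gs orth] by (intro sum.neutral) auto
    finally have "v \<bullet> v = 0" using av by simp
    moreover have "\<forall>x \<in> set gs. x \<bullet> x \<noteq> 0" using orth by (induction gs) auto
    ultimately show False using A vA by auto
  qed
  then have "card (set gs) \<le> k" using li_le_dim(2)[OF fin_dim _] gs dim_is_n by auto
  then show ?thesis using distinct_card[OF orthogonal_list_distinct[OF orth]] by simp
qed

(* M is the orthogonal projection onto the span of a longest orthogonal list in V: the residual
   v - M v of any v in V is orthogonal to that list, so by maximality it vanishes. *)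
lemma vec_subspace_projection_exists:
  assumes V: "vec_subspace k V"
  obtains M where "M \<in> carrier_mat k k" "\<And>v. v \<in> carrier_vec k \<Longrightarrow> M *\<^sub>v v \<in> V"
    "\<And>v. v \<in> V \<Longrightarrow> M *\<^sub>v v = v"
proof -
  have Vk: "V \<subseteq> carrier_vec k" using V by (simp add: vec_subspace_def)
  define admissible where "admissible gs \<longleftrightarrow> set gs \<subseteq> V \<and> orthogonal_list gs" for gs
  have "\<forall>gs. admissible gs \<longrightarrow> length gs < Suc k"
    using orthogonal_list_length_le Vk by (auto simp: admissible_def le_imp_less_Suc)
  then obtain gs where adm: "admissible gs"
    and maximal: "\<And>hs. admissible hs \<Longrightarrow> length hs \<le> length gs"
    using ex_has_greatest_nat[of admissible "[]" length "Suc k"] by (auto simp: admissible_def)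
  have gsV: "set gs \<subseteq> V" and orth: "orthogonal_list gs" using adm by (auto simp: admissible_def)
  have gsk: "set gs \<subseteq> carrier_vec k" using gsV Vk by auto
  show ?thesis
  proof
    show "proj_mat k gs *\<^sub>v v \<in> V" if "v \<in> carrier_vec k" for v
      using proj_mat_mult_vec_in_subspace[OF V gsV that] .
  next
    fix v assume vV: "v \<in> V"
    have v: "v \<in> carrier_vec k" using vV Vk by auto
    define h where "h = v - proj_mat k gs *\<^sub>v v"
    have h: "h \<in> carrier_vec k" using v by (simp add: h_def)
    have "h = v + (-1) \<cdot>\<^sub>v (proj_mat k gs *\<^sub>v v)"
      using v by (intro eq_vecI) (auto simp: h_def carrier_matD[OF proj_mat_carrier])
    then have "h \<in> V" using V vV proj_mat_mult_vec_in_subspace[OF V gsV v]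
      by (simp add: vec_subspace_def)
    moreover have "\<forall>g \<in> set gs. h \<bullet> g = 0"
      using proj_mat_residual_orthogonal[OF gsk v orth] by (simp add: h_def)
    ultimately have "\<not> admissible (h # gs)" using maximal by fastforce
    then have "h \<bullet> h = 0" using gsV orth \<open>h \<in> V\<close> \<open>\<forall>g \<in> set gs. h \<bullet> g = 0\<close>
      by (auto simp: admissible_def comm_scalar_prod[of _ k])
    then have "h = 0\<^sub>v k" using conjugate_square_eq_0_vec[OF h] by simp
    then have "h $ i = 0" if "i < k" for i using that by simp
    then show "proj_mat k gs *\<^sub>v v = v"
      using v by (intro eq_vecI) (auto simp: h_def carrier_matD[OF proj_mat_carrier])
  qed simp
qed

lemma psd_representative_on_subspace:
  assumes V: "vec_subspace k V" and P: "P \<in> carrier_mat k k" and sym: "sym_mat P"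
    and nonneg: "\<And>v. v \<in> V \<Longrightarrow> 0 \<le> v \<bullet> (P *\<^sub>v v)"
  obtains P' where "P' \<in> carrier_mat k k" "sym_mat P'" "psd_mat P'"
    "\<And>v. v \<in> V \<Longrightarrow> v \<bullet> (P' *\<^sub>v v) = v \<bullet> (P *\<^sub>v v)"
proof -
  obtain M where M: "M \<in> carrier_mat k k" and into: "\<And>v. v \<in> carrier_vec k \<Longrightarrow> M *\<^sub>v v \<in> V"
    and fix_V: "\<And>v. v \<in> V \<Longrightarrow> M *\<^sub>v v = v"
    using vec_subspace_projection_exists[OF V] by blast
  define P' where "P' = transpose_mat M * P * M"
  have MT: "transpose_mat M \<in> carrier_mat k k" using M by simp
  have P': "P' \<in> carrier_mat k k" using M P by (simp add: P'_def)
  have form: "v \<bullet> (P' *\<^sub>v v) = (M *\<^sub>v v) \<bullet> (P *\<^sub>v (M *\<^sub>v v))" if v: "v \<in> carrier_vec k" for v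
  proof -
    have Mv: "M *\<^sub>v v \<in> carrier_vec k" and PMv: "P *\<^sub>v (M *\<^sub>v v) \<in> carrier_vec k"
      using M P v by auto
    have "v \<bullet> (P' *\<^sub>v v) = v \<bullet> (transpose_mat M *\<^sub>v (P *\<^sub>v (M *\<^sub>v v)))"
      using M MT P v by (simp add: P'_def assoc_mult_mat_vec[of _ k k "P * M" k])
    also have "\<dots> = (P *\<^sub>v (M *\<^sub>v v)) \<bullet> (M *\<^sub>v v)"
      using transpose_vec_mult_scalar[OF M v PMv] MT PMv v by (simp add: comm_scalar_prod[of v k])
    finally show ?thesis using Mv PMv by (simp add: comm_scalar_prod[of _ k])
  qed
  show ?thesis
  proof
    show "P' \<in> carrier_mat k k" by (fact P')
    have "transpose_mat P' = transpose_mat M * transpose_mat (transpose_mat M * P)"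
      using M MT P by (simp add: P'_def transpose_mult[of _ k k _ k])
    also have "\<dots> = transpose_mat M * (P * M)"
      using M MT P sym by (simp add: transpose_mult[of _ k k _ k] sym_mat_def)
    finally show "sym_mat P'" using M MT P by (simp add: sym_mat_def P'_def)
    show "psd_mat P'"
      unfolding psd_mat_def using P' form into nonneg by simp
    show "v \<bullet> (P' *\<^sub>v v) = v \<bullet> (P *\<^sub>v v)" if "v \<in> V" for v
      using that V form fix_V by (auto simp: vec_subspace_def)
  qed
qed

definition linear_shift_invariant :: "nat \<Rightarrow> (nat \<Rightarrow> real vec) set \<Rightarrow> bool" where
  "linear_shift_invariant q Bh \<longleftrightarrow>
     (\<forall>w \<in> Bh. \<forall>t. w t \<in> carrier_vec q) \<and> (\<lambda>t. 0\<^sub>v q) \<in> Bh \<and>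
     (\<forall>w1 \<in> Bh. \<forall>w2 \<in> Bh. (\<lambda>t. w1 t + w2 t) \<in> Bh) \<and> (\<forall>c. \<forall>w \<in> Bh. (\<lambda>t. c \<cdot>\<^sub>v w t) \<in> Bh) \<and>
     (\<forall>w \<in> Bh. \<forall>s. (\<lambda>t. w (t + s)) \<in> Bh)"

lemma window_space_subspace:
  assumes q: "0 < q" and Bh: "linear_shift_invariant q Bh"
  shows "vec_subspace (N * q) {window q N w 0 | w. w \<in> Bh}"
proof -
  have dims: "w t \<in> carrier_vec q" if "w \<in> Bh" for w t
    using Bh that by (simp add: linear_shift_invariant_def)
  show ?thesis unfolding vec_subspace_def
  proof (intro conjI ballI allI)
    fix x y assume "x \<in> {window q N w 0 | w. w \<in> Bh}" "y \<in> {window q N w 0 | w. w \<in> Bh}"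
    then obtain w1 w2 where w: "w1 \<in> Bh" "w2 \<in> Bh" and xy: "x = window q N w1 0" "y = window q N w2 0"
      by blast
    have "x + y = window q N (\<lambda>t. w1 t + w2 t) 0"
      unfolding xy by (rule window_add[symmetric]) (use q dims w in auto)
    then show "x + y \<in> {window q N w 0 | w. w \<in> Bh}"
      using Bh w by (auto simp: linear_shift_invariant_def)
  next
    fix x c assume "x \<in> {window q N w 0 | w. w \<in> Bh}"
    then obtain w1 where w: "w1 \<in> Bh" and x: "x = window q N w1 0" by blast
    have "c \<cdot>\<^sub>v x = window q N (\<lambda>t. c \<cdot>\<^sub>v w1 t) 0"
      unfolding x by (rule window_smult[symmetric]) (use q dims w in auto)
    then show "c \<cdot>\<^sub>v x \<in> {window q N w 0 | w. w \<in> Bh}"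
      using Bh w by (auto simp: linear_shift_invariant_def)
  next
    show "0\<^sub>v (N * q) \<in> {window q N w 0 | w. w \<in> Bh}"
      using Bh window_zero[OF q, symmetric] by (auto simp: linear_shift_invariant_def)
  qed auto
qed

lemma psd_imp_QDF_nonneg:
  assumes "0 < q" "P \<in> carrier_mat (N * q) (N * q)" "psd_mat P"
  shows "0 \<le> QDF q P w t"
  using assms by (simp add: QDF_eq_quadratic_form psd_mat_def)

lemma nonneg_QDF_psd_representative:
  assumes q: "0 < q" and Bh: "linear_shift_invariant q Bh"
    and Psi: "Psi \<in> carrier_mat (N * q) (N * q)" "sym_mat Psi"
    and nonneg: "\<forall>w \<in> Bh. \<forall>t. 0 \<le> QDF q Psi w t"
  obtains Psi' where "Psi' \<in> carrier_mat (N * q) (N * q)" "sym_mat Psi'" "psd_mat Psi'"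
    "\<And>w t. w \<in> Bh \<Longrightarrow> QDF q Psi' w t = QDF q Psi w t"
proof -
  let ?V = "{window q N w 0 | w. w \<in> Bh}"
  have "0 \<le> v \<bullet> (Psi *\<^sub>v v)" if "v \<in> ?V" for v
    using that nonneg QDF_eq_quadratic_form[OF q Psi(1)] by force
  then obtain Psi' where Psi': "Psi' \<in> carrier_mat (N * q) (N * q)" "sym_mat Psi'" "psd_mat Psi'"
    and agree: "\<And>v. v \<in> ?V \<Longrightarrow> v \<bullet> (Psi' *\<^sub>v v) = v \<bullet> (Psi *\<^sub>v v)"
    using psd_representative_on_subspace[OF window_space_subspace[OF q Bh] Psi] by blast
  have windows_in: "window q N w t \<in> ?V" if "w \<in> Bh" for w t
  proof -
    have "(\<lambda>s. w (s + t)) \<in> Bh" using Bh that by (simp add: linear_shift_invariant_def)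
    then show ?thesis
      using window_shift[of q N w t] by (intro CollectI exI[of _ "\<lambda>s. w (s + t)"]) simp
  qed
  have "QDF q Psi' w t = QDF q Psi w t" if "w \<in> Bh" for w t
    using agree[OF windows_in[OF that]]
    by (simp add: QDF_eq_quadratic_form[OF q Psi(1)] QDF_eq_quadratic_form[OF q Psi'(1)])
  with Psi' show ?thesis using that by blast
qed

theorem dissipative_iff_psd_storage:
  assumes q: "0 < q" and Bh: "linear_shift_invariant q Bh"
  shows "dissipative q Bh Phi \<longleftrightarrow>
         (\<exists>Psi. is_QDF_coeff q Psi \<and> psd_mat Psi \<and>
            (\<forall>w \<in> Bh. \<forall>t. QDF q (nabla q Psi) w t \<le> QDF q Phi w t))"
proof
  assume "dissipative q Bh Phi"
  then obtain Psi N where Psi: "Psi \<in> carrier_mat (N * q) (N * q)" "sym_mat Psi"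
    and nonneg: "\<forall>w \<in> Bh. \<forall>t. 0 \<le> QDF q Psi w t"
    and dissipation: "\<forall>w \<in> Bh. \<forall>t. QDF q (nabla q Psi) w t \<le> QDF q Phi w t"
    by (auto simp: dissipative_def is_QDF_coeff_def)
  obtain Psi' where Psi': "Psi' \<in> carrier_mat (N * q) (N * q)" "sym_mat Psi'" "psd_mat Psi'"
    and agree: "\<And>w t. w \<in> Bh \<Longrightarrow> QDF q Psi' w t = QDF q Psi w t"
    using nonneg_QDF_psd_representative[OF q Bh Psi nonneg] by blast
  have "QDF q (nabla q Psi') w t = QDF q (nabla q Psi) w t" if "w \<in> Bh" for w t
    using that agree by (simp add: QDF_nabla[OF q Psi(1)] QDF_nabla[OF q Psi'(1)])
  then show "\<exists>Psi. is_QDF_coeff q Psi \<and> psd_mat Psi \<and>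
      (\<forall>w \<in> Bh. \<forall>t. QDF q (nabla q Psi) w t \<le> QDF q Phi w t)"
    using Psi' dissipation by (auto simp: is_QDF_coeff_def)
next
  assume "\<exists>Psi. is_QDF_coeff q Psi \<and> psd_mat Psi \<and>
      (\<forall>w \<in> Bh. \<forall>t. QDF q (nabla q Psi) w t \<le> QDF q Phi w t)"
  then show "dissipative q Bh Phi"
    using psd_imp_QDF_nonneg[OF q] by (auto simp: dissipative_def is_QDF_coeff_def)
qed

lemma vec_first_add: "a \<in> carrier_vec (m + p) \<Longrightarrow> b \<in> carrier_vec (m + p) \<Longrightarrow>
    vec_first (a + b) m = vec_first a m + vec_first b m"
  by (intro eq_vecI) (auto simp: vec_first_def)

lemma vec_last_add: "a \<in> carrier_vec (m + p) \<Longrightarrow> b \<in> carrier_vec (m + p) \<Longrightarrow>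
    vec_last (a + b) p = vec_last a p + vec_last b p"
  by (intro eq_vecI) (auto simp: vec_last_def)

lemma vec_first_smult: "a \<in> carrier_vec (m + p) \<Longrightarrow> vec_first (c \<cdot>\<^sub>v a) m = c \<cdot>\<^sub>v vec_first a m"
  by (intro eq_vecI) (auto simp: vec_first_def)

lemma vec_last_smult: "a \<in> carrier_vec (m + p) \<Longrightarrow> vec_last (c \<cdot>\<^sub>v a) p = c \<cdot>\<^sub>v vec_last a p"
  by (intro eq_vecI) (auto simp: vec_last_def)

lemma mult_mat_vec_pair_add:
  assumes "F \<in> carrier_mat k n" "G \<in> carrier_mat k m"
    and "x1 \<in> carrier_vec n" "x2 \<in> carrier_vec n" "u1 \<in> carrier_vec m" "u2 \<in> carrier_vec m"
  shows "F *\<^sub>v (x1 + x2) + G *\<^sub>v (u1 + u2) = (F *\<^sub>v x1 + G *\<^sub>v u1) + (F *\<^sub>v x2 + G *\<^sub>v u2)"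
  using assms
  by (intro eq_vecI) (auto simp: scalar_prod_add_distrib[of _ n] scalar_prod_add_distrib[of _ m] ac_simps)

lemma mult_mat_vec_pair_smult:
  fixes F G :: "'a :: field mat"
  assumes "F \<in> carrier_mat k n" "G \<in> carrier_mat k m" "x \<in> carrier_vec n" "u \<in> carrier_vec m"
  shows "F *\<^sub>v (c \<cdot>\<^sub>v x) + G *\<^sub>v (c \<cdot>\<^sub>v u) = c \<cdot>\<^sub>v (F *\<^sub>v x + G *\<^sub>v u)"
  using assms
  by (simp add: mult_mat_vec[of F k n] mult_mat_vec[of G k m] smult_add_distrib_vec[of _ k])

context
  fixes m p n :: nat and A B C D :: "real mat"
  assumes A: "A \<in> carrier_mat n n" and B: "B \<in> carrier_mat n m"
    and C: "C \<in> carrier_mat p n" and D: "D \<in> carrier_mat p m"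
begin

definition iso_trajectory :: "(nat \<Rightarrow> real vec) \<Rightarrow> (nat \<Rightarrow> real vec) \<Rightarrow> bool" where
  "iso_trajectory w x \<longleftrightarrow> (\<forall>t. w t \<in> carrier_vec (m + p) \<and> x t \<in> carrier_vec n \<and>
     x (Suc t) = A *\<^sub>v x t + B *\<^sub>v vec_first (w t) m \<and>
     vec_last (w t) p = C *\<^sub>v x t + D *\<^sub>v vec_first (w t) m)"

lemma iso_behavior_iff_trajectory:
  "w \<in> iso_behavior m p n A B C D \<longleftrightarrow> (\<exists>x. iso_trajectory w x)"
  by (auto simp: iso_behavior_def iso_trajectory_def)

lemma iso_trajectory_zero: "iso_trajectory (\<lambda>t. 0\<^sub>v (m + p)) (\<lambda>t. 0\<^sub>v n)"
  using A B C D
  by (auto simp: iso_trajectory_def vec_first_def vec_last_def scalar_prod_def intro!: eq_vecI)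

lemma iso_trajectory_add:
  assumes "iso_trajectory w1 x1" "iso_trajectory w2 x2"
  shows "iso_trajectory (\<lambda>t. w1 t + w2 t) (\<lambda>t. x1 t + x2 t)"
  unfolding iso_trajectory_def
proof
  fix t
  have w: "w1 t \<in> carrier_vec (m + p)" "w2 t \<in> carrier_vec (m + p)"
    and x: "x1 t \<in> carrier_vec n" "x2 t \<in> carrier_vec n"
    using assms by (auto simp: iso_trajectory_def)
  then show "w1 t + w2 t \<in> carrier_vec (m + p) \<and> x1 t + x2 t \<in> carrier_vec n \<and>
      x1 (Suc t) + x2 (Suc t) = A *\<^sub>v (x1 t + x2 t) + B *\<^sub>v vec_first (w1 t + w2 t) m \<and>
      vec_last (w1 t + w2 t) p = C *\<^sub>v (x1 t + x2 t) + D *\<^sub>v vec_first (w1 t + w2 t) m"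
    using assms by (simp add: iso_trajectory_def vec_first_add[OF w] vec_last_add[OF w]
        mult_mat_vec_pair_add[OF A B] mult_mat_vec_pair_add[OF C D])
qed

lemma iso_trajectory_smult:
  assumes "iso_trajectory w x"
  shows "iso_trajectory (\<lambda>t. c \<cdot>\<^sub>v w t) (\<lambda>t. c \<cdot>\<^sub>v x t)"
  unfolding iso_trajectory_def
proof
  fix t
  have w: "w t \<in> carrier_vec (m + p)" and x: "x t \<in> carrier_vec n"
    using assms by (auto simp: iso_trajectory_def)
  then show "c \<cdot>\<^sub>v w t \<in> carrier_vec (m + p) \<and> c \<cdot>\<^sub>v x t \<in> carrier_vec n \<and>
      c \<cdot>\<^sub>v x (Suc t) = A *\<^sub>v (c \<cdot>\<^sub>v x t) + B *\<^sub>v vec_first (c \<cdot>\<^sub>v w t) m \<and>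
      vec_last (c \<cdot>\<^sub>v w t) p = C *\<^sub>v (c \<cdot>\<^sub>v x t) + D *\<^sub>v vec_first (c \<cdot>\<^sub>v w t) m"
    using assms by (simp add: iso_trajectory_def vec_first_smult[OF w] vec_last_smult[OF w]
        mult_mat_vec_pair_smult[OF A B] mult_mat_vec_pair_smult[OF C D])
qed

lemma iso_trajectory_shift: "iso_trajectory w x \<Longrightarrow> iso_trajectory (\<lambda>t. w (t + s)) (\<lambda>t. x (t + s))"
  by (simp add: iso_trajectory_def)

lemma iso_behavior_linear_shift_invariant:
  "linear_shift_invariant (m + p) (iso_behavior m p n A B C D)"
proof -
  let ?Bh = "iso_behavior m p n A B C D"
  have "w t \<in> carrier_vec (m + p)" if "w \<in> ?Bh" for w t
    using that by (auto simp: iso_behavior_iff_trajectory iso_trajectory_def)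
  moreover have "(\<lambda>t. 0\<^sub>v (m + p)) \<in> ?Bh"
    using iso_trajectory_zero iso_behavior_iff_trajectory by blast
  moreover have "(\<lambda>t. w1 t + w2 t) \<in> ?Bh" if "w1 \<in> ?Bh" "w2 \<in> ?Bh" for w1 w2
    using that iso_trajectory_add iso_behavior_iff_trajectory by meson
  moreover have "(\<lambda>t. c \<cdot>\<^sub>v w t) \<in> ?Bh" if "w \<in> ?Bh" for c w
    using that iso_trajectory_smult iso_behavior_iff_trajectory by meson
  moreover have "(\<lambda>t. w (t + s)) \<in> ?Bh" if "w \<in> ?Bh" for w s
    using that iso_trajectory_shift iso_behavior_iff_trajectory by meson
  ultimately show ?thesis unfolding linear_shift_invariant_def by blast
qed

end

theorem lemma1:
  fixes m p :: nat and Bh :: "(nat \<Rightarrow> real vec) set" and Phi :: "real mat"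
  assumes "1 \<le> m" and "1 \<le> p"
    and "Bh \<in> L_mp m p"
    and "is_QDF_coeff (m + p) Phi"
  shows "dissipative (m + p) Bh Phi \<longleftrightarrow>
         (\<exists>Psi. is_QDF_coeff (m + p) Psi \<and> psd_mat Psi \<and>
            (\<forall>w \<in> Bh. \<forall>t. QDF (m + p) (nabla (m + p) Psi) w t \<le> QDF (m + p) Phi w t))"
proof -
  have "linear_shift_invariant (m + p) Bh"
    using assms(3) iso_behavior_linear_shift_invariant by (auto simp: L_mp_def)
  moreover have "0 < m + p" using assms(1) by simp
  ultimately show ?thesis by (rule dissipative_iff_psd_storage[rotated])
qed

end
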